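(* Let $n\ge1$, $\beta\in\mathbb C\setminus\{0\}$. (i) The assignment $\tilde T_{ij}(u)\mapsto\delta_{ij}+E_{ij}\,\frac{1}{u+\beta/u}$ (with $\frac1{u+\beta/u}$ expanded in powers of $u^{-1}$, and the map defined by comparing coefficients of $u^{-r}$) defines a surjective algebra homomorphism $OY_\beta(\mathfrak{gl}_n)\to U(\mathfrak{gl}_n)$, and the assignment $E_{ij}\mapsto\tilde t^{(1)}_{ij}$ defines an embedding $U(\mathfrak{gl}_n)\to OY_\beta(\mathfrak{gl}_n)$. (ii) The assignment $\tilde T_{ij}(u)\mapsto T_{ij}(u+\beta/u)$ defines a homomorphism $OY_\beta(\mathfrak{gl}_n)[u^{-1}]\to Y(\mathfrak{gl}_n)[u^{-1}]$. (iii) For any $f(u)=1+\sum_{k\ge1}f_ku^{-k}\in\mathbb C[[u^{-1}]]$ and any invertible $B\in GL_n(\mathbb C)$, the maps (a) $\tilde T(u)\mapsto f(u)\tilde T(u)$ and (b) $\tilde T(u)\mapsto B\tilde T(u)B^{-1}$ define automorphisms of $OY_\beta(\mathfrak{gl}_n)$.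
   Context: $OY_\beta(\mathfrak{gl}_n)$ is the unital associative $\mathbb C$-algebra with generators $\tilde t^{(r)}_{ij}$ ($1\le i,j\le n$, $r\ge1$) subject to the relations $\left(u+\frac\beta u-v-\frac\beta v\right)[\tilde T_{ij}(u),\tilde T_{kl}(v)]=\tilde T_{kj}(u)\tilde T_{il}(v)-\tilde T_{kj}(v)\tilde T_{il}(u)$ for all $i,j,k,l$, where $\tilde T_{ij}(u)=\delta_{ij}+\sum_{r\ge1}\tilde t^{(r)}_{ij}u^{-r}$ and $\tilde T(u)=(\tilde T_{ij}(u))_{i,j}$ (equivalently, $[\tilde t^{(r+1)}_{ij}+\beta\tilde t^{(r-1)}_{ij},\tilde t^{(s)}_{kl}]-[\tilde t^{(r)}_{ij},\tilde t^{(s+1)}_{kl}+\beta\tilde t^{(s-1)}_{kl}]=\tilde t^{(r)}_{kj}\tilde t^{(s)}_{il}-\tilde t^{(s)}_{kj}\tilde t^{(r)}_{il}$ for $r,s\ge0$ with $\tilde t^{(0)}_{ij}=\delta_{ij}$, $\tilde t^{(-1)}_{ij}=0$). $E_{ij}$ are the standard matrix units spanning $\mathfrak{gl}_n$. $Y(\mathfrak{gl}_n)$ is the Yangian with generators $t^{(r)}_{ij}$ and relations $[t^{(r+1)}_{ij},t^{(s)}_{kl}]-[t^{(r)}_{ij},t^{(s+1)}_{kl}]=t^{(r)}_{kj}t^{(s)}_{il}-t^{(s)}_{kj}t^{(r)}_{il}$ ($r,s\ge0$, $t^{(0)}_{ij}=\delta_{ij}$), and $T_{ij}(w)=\sum_{r\ge0}t^{(r)}_{ij}w^{-r}$;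 $T_{ij}(u+\beta/u)$ is expanded in powers of $u^{-1}$. *)

theory Defs
  imports "HOL-Analysis.Analysis" "HOL-Library.Poly_Mapping"
          "HOL-Computational_Algebra.Formal_Power_Series"
begin

text \<open>The free unital associative C-algebra on a generator type 'g: finitely supported
  C-linear combinations of words (lists) in the generators.\<close>
type_synonym 'g falg = "'g list \<Rightarrow>\<^sub>0 complex"

definition fa_const :: "complex \<Rightarrow> 'g falg" where
  "fa_const c = Poly_Mapping.single [] c"

definition fa_var :: "'g \<Rightarrow> 'g falg" where
  "fa_var g = Poly_Mapping.single [g] 1"

definition fa_mult :: "'g falg \<Rightarrow> 'g falg \<Rightarrow> 'g falg" where
  "fa_mult p q = (\<Sum>a\<in>Poly_Mapping.keys p. \<Sum>b\<in>Poly_Mapping.keys q. Poly_Mapping.single (a @ b) (Poly_Mapping.lookup p a * Poly_Mapping.lookup q b))"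

definition fa_smult :: "complex \<Rightarrow> 'g falg \<Rightarrow> 'g falg" where
  "fa_smult c p = fa_mult (fa_const c) p"

definition fa_comm :: "'g falg \<Rightarrow> 'g falg \<Rightarrow> 'g falg" where
  "fa_comm p q = fa_mult p q - fa_mult q p"

definition fa_subst :: "('g \<Rightarrow> 'h falg) \<Rightarrow> 'g falg \<Rightarrow> 'h falg" where
  "fa_subst \<phi> p = (\<Sum>w\<in>Poly_Mapping.keys p. fa_smult (Poly_Mapping.lookup p w) (foldr (\<lambda>g acc. fa_mult (\<phi> g) acc) w (fa_const 1)))"

inductive_set fa_ideal :: "'g falg set \<Rightarrow> 'g falg set" for R where
  gen: "x \<in> R \<Longrightarrow> x \<in> fa_ideal R"
| zero: "0 \<in> fa_ideal R"
| add: "x \<in> fa_ideal R \<Longrightarrow> y \<in> fa_ideal R \<Longrightarrow> x + y \<in> fa_ideal R"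
| lmult: "x \<in> fa_ideal R \<Longrightarrow> fa_mult a x \<in> fa_ideal R"
| rmult: "x \<in> fa_ideal R \<Longrightarrow> fa_mult x a \<in> fa_ideal R"

text \<open>For presented algebras A = F('g)/(R), B = F('h)/(S) and an assignment \<phi> of
  generators of A to elements of F('h):\<close>

text \<open>\<phi> defines an algebra homomorphism A \<rightarrow> B.\<close>
definition pres_hom :: "'g falg set \<Rightarrow> 'h falg set \<Rightarrow> ('g \<Rightarrow> 'h falg) \<Rightarrow> bool" where
  "pres_hom R S \<phi> \<longleftrightarrow> (\<forall>p\<in>fa_ideal R. fa_subst \<phi> p \<in> fa_ideal S)"

text \<open>the induced map A \<rightarrow> B is surjective\<close>
definition pres_surj :: "'g falg set \<Rightarrow> 'h falg set \<Rightarrow> ('g \<Rightarrow> 'h falg) \<Rightarrow> bool" where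
  "pres_surj R S \<phi> \<longleftrightarrow> (\<forall>q. \<exists>p. q - fa_subst \<phi> p \<in> fa_ideal S)"

text \<open>the induced map A \<rightarrow> B is injective\<close>
definition pres_inj :: "'g falg set \<Rightarrow> 'h falg set \<Rightarrow> ('g \<Rightarrow> 'h falg) \<Rightarrow> bool" where
  "pres_inj R S \<phi> \<longleftrightarrow> (\<forall>p. fa_subst \<phi> p \<in> fa_ideal S \<longrightarrow> p \<in> fa_ideal R)"

definition pres_aut :: "'g falg set \<Rightarrow> ('g \<Rightarrow> 'g falg) \<Rightarrow> bool" where
  "pres_aut R \<phi> \<longleftrightarrow> pres_hom R R \<phi> \<and> pres_inj R R \<phi> \<and> pres_surj R R \<phi>"

definition kdelta :: "'n \<Rightarrow> 'n \<Rightarrow> complex" where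
  "kdelta i j = (if i = j then 1 else 0)"

text \<open>OY_beta(gl_n): generator (i,j,m) stands for t~^(m+1)_ij (m \<ge> 0).
  oy_t i j r is t~^(r)_ij for r \<ge> 1, with t~^(0)_ij = delta_ij and t~^(-1)_ij = 0.\<close>
definition oy_t :: "'n \<Rightarrow> 'n \<Rightarrow> int \<Rightarrow> ('n \<times> 'n \<times> nat) falg" where
  "oy_t i j r = (if r < 0 then 0 else if r = 0 then fa_const (kdelta i j)
                 else fa_var (i, j, nat (r - 1)))"

definition OY_rels :: "complex \<Rightarrow> ('n \<times> 'n \<times> nat) falg set" where
  "OY_rels \<beta> = {fa_comm (oy_t i j (int r + 1) + fa_smult \<beta> (oy_t i j (int r - 1))) (oy_t k l (int s))
      - fa_comm (oy_t i j (int r)) (oy_t k l (int s + 1) + fa_smult \<beta> (oy_t k l (int s - 1)))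
      - (fa_mult (oy_t k j (int r)) (oy_t i l (int s)) - fa_mult (oy_t k j (int s)) (oy_t i l (int r)))
      | i j k l r s. True}"

text \<open>Yangian Y(gl_n): generator (i,j,m) stands for t^(m+1)_ij; y_t i j 0 = delta_ij.\<close>
definition y_t :: "'n \<Rightarrow> 'n \<Rightarrow> nat \<Rightarrow> ('n \<times> 'n \<times> nat) falg" where
  "y_t i j r = (if r = 0 then fa_const (kdelta i j) else fa_var (i, j, r - 1))"

definition Y_rels :: "('n \<times> 'n \<times> nat) falg set" where
  "Y_rels = {fa_comm (y_t i j (r + 1)) (y_t k l s) - fa_comm (y_t i j r) (y_t k l (s + 1))
      - (fa_mult (y_t k j r) (y_t i l s) - fa_mult (y_t k j s) (y_t i l r))
      | i j k l r s. True}"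

definition U_rels :: "('n \<times> 'n) falg set" where
  "U_rels = {fa_comm (fa_var (i, j)) (fa_var (k, l))
      - (fa_smult (kdelta k j) (fa_var (i, l)) - fa_smult (kdelta i l) (fa_var (k, j)))
      | i j k l. True}"

text \<open>The series 1/(u + beta/u) written in the variable x = u^{-1}: x / (1 + beta x^2).
  Its x^r coefficient is the coefficient of u^{-r}.\<close>
definition c_beta :: "complex \<Rightarrow> complex fps" where
  "c_beta \<beta> = fps_X / (1 + fps_const \<beta> * fps_X ^ 2)"

text \<open>(i) T~_ij(u) \<mapsto> delta_ij + E_ij/(u+beta/u): t~^(r)_ij \<mapsto> [u^{-r}] (E_ij/(u+beta/u)).\<close>
definition ev_map :: "complex \<Rightarrow> ('n \<times> 'n \<times> nat) \<Rightarrow> ('n \<times> 'n) falg" where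
  "ev_map \<beta> = (\<lambda>(i, j, m). fa_smult (fps_nth (c_beta \<beta>) (Suc m)) (fa_var (i, j)))"

definition oy_emb :: "('n \<times> 'n) \<Rightarrow> ('n \<times> 'n \<times> nat) falg" where
  "oy_emb = (\<lambda>(i, j). oy_t i j 1)"

text \<open>(ii) T~_ij(u) \<mapsto> T_ij(u + beta/u) = sum_s t^(s)_ij (u+beta/u)^{-s}:
  t~^(r)_ij \<mapsto> sum_{s=0..r} [u^{-r}](u+beta/u)^{-s} t^(s)_ij (terms s > r vanish).\<close>
definition yan_map :: "complex \<Rightarrow> ('n \<times> 'n \<times> nat) \<Rightarrow> ('n \<times> 'n \<times> nat) falg" where
  "yan_map \<beta> = (\<lambda>(i, j, m). \<Sum>s\<in>{0..Suc m}.
      fa_smult (fps_nth (c_beta \<beta> ^ s) (Suc m)) (y_t i j s))"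

text \<open>(iii a) T~(u) \<mapsto> f(u) T~(u), f given as a power series in x = u^{-1}:
  t~^(r)_ij \<mapsto> sum_{s=0..r} f_{r-s} t~^(s)_ij.\<close>
definition mult_map :: "complex fps \<Rightarrow> ('n \<times> 'n \<times> nat) \<Rightarrow> ('n \<times> 'n \<times> nat) falg" where
  "mult_map f = (\<lambda>(i, j, m). \<Sum>s\<in>{0..Suc m}.
      fa_smult (fps_nth f (Suc m - s)) (oy_t i j (int s)))"

definition conj_map :: "complex^'n^'n \<Rightarrow> ('n::finite \<times> 'n \<times> nat) \<Rightarrow> ('n \<times> 'n \<times> nat) falg" where
  "conj_map B = (\<lambda>(i, j, m). \<Sum>a\<in>UNIV. \<Sum>b\<in>UNIV.
      fa_smult (B $ i $ a * matrix_inv B $ b $ j) (oy_t a b (int (Suc m))))"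

end

theory Submission
  imports Defs
begin

text \<open>Each map sends the generating matrix \<open>T~(u)\<close> to a combination \<open>\<Sum>p. a_p(u) Z_p\<close>, where
  \<open>Z_p\<close> is the coefficient of \<open>w^-p\<close> in a generating matrix \<open>Z(w)\<close> of the target satisfying
  the defining relation of \<open>OY_\<gamma>\<close> for some \<open>\<gamma>\<close>: the Yangian matrix \<open>T(w)\<close> and \<open>1 + E w^-1\<close>
  in \<open>U(gl_n)\<close> with \<open>\<gamma> = 0\<close>, and \<open>T~(w)\<close> itself with \<open>\<gamma> = \<beta>\<close>. The coefficient series satisfy
  \<open>(u + \<beta>/u) a_p(u) = a_(p-1)(u) + \<gamma> a_(p+1)(u)\<close>, namely \<open>a_p = (u + \<beta>/u)^-p\<close> for the
  evaluation and Yangian maps and \<open>a_p = f(u) u^-p\<close> for multiplication by \<open>f\<close>. This identity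
  turns each defining relator of \<open>OY_\<beta>\<close> into a linear combination of defining relators of the
  target, up to central constants that drop out of the commutators. Conjugation by \<open>B\<close> only
  mixes the matrix indices, and the relators are equivariant under it. The inverse
  automorphisms come from \<open>f^-1\<close> and \<open>B^-1\<close>, and \<open>E_ij \<mapsto> t~(1)_ij\<close> is a section of the
  evaluation map, which makes the evaluation map surjective and the embedding injective.\<close>

section \<open>Free algebras as polynomial mappings on words\<close>

text \<open>With concatenation as monoid operation on words, the convolution product of
  polynomial mappings is the product of the free algebra (\<open>fa_mult_eq_times\<close>).\<close>

instantiation list :: (type) monoid_add
begin
definition zero_list_def: "0 = []"
definition plus_list_def: "xs + ys = xs @ ys"
instance by standard (auto simp: zero_list_def plus_list_def)
end

lemma poly_mapping_sum_single_lookup: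
  "(p :: 'a \<Rightarrow>\<^sub>0 'b::comm_monoid_add)
     = (\<Sum>w\<in>Poly_Mapping.keys p. Poly_Mapping.single w (Poly_Mapping.lookup p w))"
proof (rule poly_mapping_eqI)
  fix k
  have "finite I \<Longrightarrow> Poly_Mapping.lookup (\<Sum>w\<in>I. Poly_Mapping.single w (Poly_Mapping.lookup p w)) k
      = (if k \<in> I then Poly_Mapping.lookup p k else 0)" for I
    by (induction I rule: finite_induct) (auto simp: lookup_single lookup_add when_def)
  then show "Poly_Mapping.lookup p k
      = Poly_Mapping.lookup (\<Sum>w\<in>Poly_Mapping.keys p. Poly_Mapping.single w (Poly_Mapping.lookup p w)) k"
    by (simp add: in_keys_iff)
qed

lemma fa_mult_eq_times: "fa_mult p q = p * q"
proof -
  have "p * q = (\<Sum>a\<in>Poly_Mapping.keys p. Poly_Mapping.single a (Poly_Mapping.lookup p a))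
      * (\<Sum>b\<in>Poly_Mapping.keys q. Poly_Mapping.single b (Poly_Mapping.lookup q b))"
    using poly_mapping_sum_single_lookup[of p] poly_mapping_sum_single_lookup[of q] by simp
  also have "\<dots> = fa_mult p q"
    unfolding fa_mult_def
    by (simp add: sum_distrib_left sum_distrib_right mult_single plus_list_def) (rule sum.swap)
  finally show ?thesis by simp
qed

lemma fa_const_eq_single: "fa_const c = Poly_Mapping.single 0 c"
  by (simp add: fa_const_def zero_list_def)

lemma fa_const_1 [simp]: "fa_const 1 = 1"
  and fa_const_0 [simp]: "fa_const 0 = 0"
  and fa_const_mult: "fa_const (a * b) = fa_const a * fa_const b"
  and fa_const_add: "fa_const (a + b) = fa_const a + fa_const b"
  and fa_const_diff: "fa_const (a - b) = fa_const a - fa_const b"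
  and fa_const_uminus: "fa_const (- a) = - fa_const a"
  by (simp_all add: fa_const_eq_single mult_single single_add single_diff single_uminus)

lemma fa_const_sum: "fa_const (sum f A) = (\<Sum>x\<in>A. fa_const (f x))"
  by (induction A rule: infinite_finite_induct) (auto simp: fa_const_add)

lemma fa_const_commute: "fa_const c * p = p * fa_const c"
proof -
  have "fa_const c * (\<Sum>w\<in>Poly_Mapping.keys p. Poly_Mapping.single w (Poly_Mapping.lookup p w))
      = (\<Sum>w\<in>Poly_Mapping.keys p. Poly_Mapping.single w (Poly_Mapping.lookup p w)) * fa_const c"
    by (simp add: fa_const_eq_single sum_distrib_left sum_distrib_right mult_single mult.commute)
  then show ?thesis
    using poly_mapping_sum_single_lookup[of p] by simp
qed

lemma fa_const_left_commute: "fa_const a * (fa_const b * x) = fa_const b * (fa_const a * x)"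
  by (simp add: mult.assoc [symmetric] fa_const_mult [symmetric] mult.commute)

lemma fa_const_times_fa_const: "fa_const a * x * (fa_const b * y) = fa_const (a * b) * (x * y)"
  by (simp add: fa_const_mult mult.assoc) (metis fa_const_commute mult.assoc)

lemma fa_smult_eq_times: "fa_smult c p = fa_const c * p"
  by (simp add: fa_smult_def fa_mult_eq_times)

lemma fa_comm_eq: "fa_comm p q = p * q - q * p"
  by (simp add: fa_comm_def fa_mult_eq_times)

lemma fa_comm_fa_const [simp]: "fa_comm (fa_const c) p = 0" "fa_comm p (fa_const c) = 0"
  by (simp_all add: fa_comm_eq fa_const_commute)

lemma fa_comm_zero [simp]: "fa_comm 0 p = 0" "fa_comm p 0 = 0"
  by (simp_all add: fa_comm_eq)

lemma fa_comm_add_fa_const [simp]: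
  "fa_comm (p + fa_const c) q = fa_comm p q" "fa_comm p (q + fa_const c) = fa_comm p q"
  by (simp_all add: fa_comm_eq distrib_left distrib_right fa_const_commute)

definition fa_word :: "('g \<Rightarrow> 'h falg) \<Rightarrow> 'g list \<Rightarrow> 'h falg" where
  "fa_word \<phi> w = foldr (\<lambda>g acc. fa_mult (\<phi> g) acc) w (fa_const 1)"

lemma fa_word_simps [simp]:
  "fa_word \<phi> [] = 1" "fa_word \<phi> (g # w) = \<phi> g * fa_word \<phi> w"
  by (simp_all add: fa_word_def fa_mult_eq_times)

lemma fa_word_append: "fa_word \<phi> (a @ b) = fa_word \<phi> a * fa_word \<phi> b"
  by (induction a) (simp_all add: mult.assoc)

lemma fa_subst_eq_sum_keys:
  "fa_subst \<phi> p = (\<Sum>w\<in>Poly_Mapping.keys p. fa_const (Poly_Mapping.lookup p w) * fa_word \<phi> w)"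
  by (simp add: fa_subst_def fa_word_def fa_smult_eq_times)

lemma fa_subst_eq_sum_words:
  assumes "finite W" "Poly_Mapping.keys p \<subseteq> W"
  shows "fa_subst \<phi> p = (\<Sum>w\<in>W. fa_const (Poly_Mapping.lookup p w) * fa_word \<phi> w)"
  unfolding fa_subst_eq_sum_keys
  by (rule sum.mono_neutral_left) (use assms in \<open>auto simp: in_keys_iff\<close>)

lemma fa_subst_single: "fa_subst \<phi> (Poly_Mapping.single w c) = fa_const c * fa_word \<phi> w"
  by (simp add: fa_subst_eq_sum_words[of "{w}"])

lemma fa_subst_add: "fa_subst \<phi> (p + q) = fa_subst \<phi> p + fa_subst \<phi> q"
proof -
  let ?W = "Poly_Mapping.keys p \<union> Poly_Mapping.keys q"
  have "Poly_Mapping.keys (p + q) \<subseteq> ?W" by (rule keys_add)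
  then show ?thesis
    by (simp add: fa_subst_eq_sum_words[of ?W] lookup_add fa_const_add distrib_right sum.distrib)
qed

lemma fa_subst_zero [simp]: "fa_subst \<phi> 0 = 0"
  by (simp add: fa_subst_def)

lemma fa_subst_uminus: "fa_subst \<phi> (- p) = - fa_subst \<phi> p"
  by (metis add_eq_0_iff fa_subst_add fa_subst_zero)

lemma fa_subst_diff: "fa_subst \<phi> (p - q) = fa_subst \<phi> p - fa_subst \<phi> q"
  by (metis diff_conv_add_uminus fa_subst_add fa_subst_uminus)

lemma fa_subst_sum: "fa_subst \<phi> (sum f A) = (\<Sum>x\<in>A. fa_subst \<phi> (f x))"
  by (induction A rule: infinite_finite_induct) (auto simp: fa_subst_add)

lemma fa_subst_mult: "fa_subst \<phi> (p * q) = fa_subst \<phi> p * fa_subst \<phi> q"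
proof -
  have "fa_subst \<phi> (p * q)
      = fa_subst \<phi> ((\<Sum>a\<in>Poly_Mapping.keys p. Poly_Mapping.single a (Poly_Mapping.lookup p a))
          * (\<Sum>b\<in>Poly_Mapping.keys q. Poly_Mapping.single b (Poly_Mapping.lookup q b)))"
    using poly_mapping_sum_single_lookup[of p] poly_mapping_sum_single_lookup[of q] by simp
  also have "\<dots> = (\<Sum>a\<in>Poly_Mapping.keys p. fa_const (Poly_Mapping.lookup p a) * fa_word \<phi> a)
      * (\<Sum>b\<in>Poly_Mapping.keys q. fa_const (Poly_Mapping.lookup q b) * fa_word \<phi> b)"
    by (simp add: sum_distrib_left sum_distrib_right mult_single fa_subst_sum fa_subst_single
        plus_list_def fa_word_append fa_const_times_fa_const)
  also have "\<dots> = fa_subst \<phi> p * fa_subst \<phi> q"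
    by (simp add: fa_subst_eq_sum_keys)
  finally show ?thesis .
qed

lemma fa_subst_const [simp]: "fa_subst \<phi> (fa_const c) = fa_const c"
  by (simp add: fa_const_def fa_subst_single)

lemma fa_subst_one [simp]: "fa_subst \<phi> 1 = 1"
  using fa_subst_const[of \<phi> 1] by simp

lemma fa_subst_var [simp]: "fa_subst \<phi> (fa_var g) = \<phi> g"
  by (simp add: fa_var_def fa_subst_single)

lemma fa_subst_fa_comm: "fa_subst \<phi> (fa_comm p q) = fa_comm (fa_subst \<phi> p) (fa_subst \<phi> q)"
  by (simp add: fa_comm_eq fa_subst_diff fa_subst_mult)

lemma fa_subst_fa_word: "fa_subst \<psi> (fa_word \<phi> w) = fa_word (\<lambda>g. fa_subst \<psi> (\<phi> g)) w"
  by (induction w) (simp_all add: fa_subst_mult)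

lemma fa_subst_fa_subst: "fa_subst \<psi> (fa_subst \<phi> p) = fa_subst (\<lambda>g. fa_subst \<psi> (\<phi> g)) p"
  by (simp add: fa_subst_eq_sum_keys[of \<phi>] fa_subst_sum fa_subst_mult fa_subst_fa_word)
    (simp add: fa_subst_eq_sum_keys)

lemma single_Nil_one [simp]: "Poly_Mapping.single [] (1::complex) = 1"
  by (metis single_one zero_list_def)

lemma fa_word_fa_var: "fa_word fa_var w = Poly_Mapping.single w 1"
  by (induction w) (simp_all add: fa_var_def mult_single plus_list_def)

lemma fa_subst_fa_var: "fa_subst fa_var p = p"
  using poly_mapping_sum_single_lookup[of p]
  by (simp add: fa_subst_eq_sum_keys fa_word_fa_var fa_const_eq_single mult_single)

section \<open>Homomorphisms between presented algebras\<close>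

lemma fa_ideal_times_left: "x \<in> fa_ideal R \<Longrightarrow> a * x \<in> fa_ideal R"
  using fa_ideal.lmult[of x R a] by (simp add: fa_mult_eq_times)

lemma fa_ideal_times_right: "x \<in> fa_ideal R \<Longrightarrow> x * a \<in> fa_ideal R"
  using fa_ideal.rmult[of x R a] by (simp add: fa_mult_eq_times)

lemma fa_ideal_uminus: "x \<in> fa_ideal R \<Longrightarrow> - x \<in> fa_ideal R"
  using fa_ideal_times_left[of x R "fa_const (-1)"] by (simp add: fa_const_uminus)

lemma fa_ideal_sum: "(\<And>a. a \<in> A \<Longrightarrow> f a \<in> fa_ideal R) \<Longrightarrow> sum f A \<in> fa_ideal R"
  by (induction A rule: infinite_finite_induct) (auto intro: fa_ideal.zero fa_ideal.add)

lemma pres_homI: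
  assumes "\<And>r. r \<in> R \<Longrightarrow> fa_subst \<phi> r \<in> fa_ideal S"
  shows "pres_hom R S \<phi>"
  unfolding pres_hom_def
proof
  fix p assume "p \<in> fa_ideal R"
  then show "fa_subst \<phi> p \<in> fa_ideal S"
    by induction (auto simp: assms fa_subst_add fa_mult_eq_times fa_subst_mult
        intro: fa_ideal.zero fa_ideal.add fa_ideal_times_left fa_ideal_times_right)
qed

lemma pres_injI:
  assumes "pres_hom S R \<psi>" "\<And>g. fa_subst \<psi> (\<phi> g) = fa_var g"
  shows "pres_inj R S \<phi>"
  unfolding pres_inj_def
proof (intro allI impI)
  fix p assume "fa_subst \<phi> p \<in> fa_ideal S"
  then have "fa_subst \<psi> (fa_subst \<phi> p) \<in> fa_ideal R"
    using assms(1) by (simp add: pres_hom_def)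
  then show "p \<in> fa_ideal R"
    by (simp add: fa_subst_fa_subst assms(2) fa_subst_fa_var)
qed

lemma pres_surjI:
  assumes "\<And>g. fa_subst \<phi> (\<psi> g) = fa_var g"
  shows "pres_surj R S \<phi>"
  unfolding pres_surj_def
proof
  fix q
  have "q - fa_subst \<phi> (fa_subst \<psi> q) = 0"
    by (simp add: fa_subst_fa_subst assms fa_subst_fa_var)
  then show "\<exists>p. q - fa_subst \<phi> p \<in> fa_ideal S"
    using fa_ideal.zero by metis
qed

lemma pres_autI:
  assumes "pres_hom R R \<phi>" "pres_hom R R \<psi>"
    and "\<And>g. fa_subst \<psi> (\<phi> g) = fa_var g" "\<And>g. fa_subst \<phi> (\<psi> g) = fa_var g"
  shows "pres_aut R \<phi>"
  unfolding pres_aut_def using assms pres_injI pres_surjI by metis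

text \<open>A family \<open>Z i j t\<close> stands for the coefficient of \<open>u^-t\<close> in a generating matrix \<open>Z(u)\<close>;
  \<open>oy_relator \<gamma> Z\<close> is the defining relation of \<open>OY_\<gamma>\<close> in coefficient form, which for \<open>\<gamma> = 0\<close>
  is the defining relation of the Yangian.\<close>

definition oy_shift :: "complex \<Rightarrow> ('n \<Rightarrow> 'n \<Rightarrow> int \<Rightarrow> 'h falg) \<Rightarrow> 'n \<Rightarrow> 'n \<Rightarrow> int \<Rightarrow> 'h falg" where
  "oy_shift \<gamma> Z i j r = Z i j (r + 1) + fa_const \<gamma> * Z i j (r - 1)"

definition oy_relator ::
    "complex \<Rightarrow> ('n \<Rightarrow> 'n \<Rightarrow> int \<Rightarrow> 'h falg) \<Rightarrow> 'n \<Rightarrow> 'n \<Rightarrow> 'n \<Rightarrow> 'n \<Rightarrow> int \<Rightarrow> int \<Rightarrow> 'h falg" where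
  "oy_relator \<gamma> Z i j k l r s =
     fa_comm (oy_shift \<gamma> Z i j r) (Z k l s) - fa_comm (Z i j r) (oy_shift \<gamma> Z k l s)
     - (Z k j r * Z i l s - Z k j s * Z i l r)"

lemma oy_t_neg_1: "oy_t i j (-1) = 0"
  and oy_t_0: "oy_t i j 0 = fa_const (kdelta i j)"
  and oy_t_pos: "t > 0 \<Longrightarrow> oy_t i j t = fa_var (i, j, nat (t - 1))"
  by (simp_all add: oy_t_def)

lemma OY_rels_eq_oy_relators:
  "OY_rels \<beta> = {oy_relator \<beta> oy_t i j k l (int r) (int s) | i j k l r s. True}"
  by (simp add: OY_rels_def oy_relator_def oy_shift_def fa_smult_eq_times fa_mult_eq_times)

lemma oy_relator_in_OY_ideal: "oy_relator \<beta> oy_t i j k l (int r) (int s) \<in> fa_ideal (OY_rels \<beta>)"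
  unfolding OY_rels_eq_oy_relators by (rule fa_ideal.gen) blast

lemma fa_subst_oy_relator:
  "fa_subst \<phi> (oy_relator \<gamma> Z i j k l r s) = oy_relator \<gamma> (\<lambda>i j t. fa_subst \<phi> (Z i j t)) i j k l r s"
  by (simp add: oy_relator_def oy_shift_def fa_subst_fa_comm fa_subst_diff fa_subst_mult fa_subst_add)

lemma sum_fa_const_times_sum:
  "(\<Sum>p\<in>P. fa_const (a p) * x p) * (\<Sum>q\<in>Q. fa_const (b q) * y q)
     = (\<Sum>p\<in>P. \<Sum>q\<in>Q. fa_const (a p * b q) * (x p * y q))"
  by (simp add: sum_distrib_left sum_distrib_right fa_const_times_fa_const) (rule sum.swap)

lemma sum_fa_const_times_sum_swap:
  "(\<Sum>q\<in>Q. fa_const (b q) * y q) * (\<Sum>p\<in>P. fa_const (a p) * x p)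
     = (\<Sum>p\<in>P. \<Sum>q\<in>Q. fa_const (a p * b q) * (y q * x p))"
proof -
  have "(\<Sum>q\<in>Q. fa_const (b q) * y q) * (\<Sum>p\<in>P. fa_const (a p) * x p)
      = (\<Sum>q\<in>Q. \<Sum>p\<in>P. fa_const (a p * b q) * (y q * x p))"
    unfolding sum_fa_const_times_sum by (intro sum.cong refl) (simp add: mult.commute)
  also have "\<dots> = (\<Sum>p\<in>P. \<Sum>q\<in>Q. fa_const (a p * b q) * (y q * x p))"
    by (rule sum.swap)
  finally show ?thesis .
qed

lemma fa_comm_sum_fa_const:
  "fa_comm (\<Sum>p\<in>P. fa_const (a p) * x p) (\<Sum>q\<in>Q. fa_const (b q) * y q)
     = (\<Sum>p\<in>P. \<Sum>q\<in>Q. fa_const (a p * b q) * fa_comm (x p) (y q))"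
  unfolding fa_comm_eq sum_fa_const_times_sum_swap[of b y Q a x P]
  unfolding sum_fa_const_times_sum
  by (simp add: sum_subtractf right_diff_distrib)

lemma oy_relator_expansion:
  fixes X Z :: "'n \<Rightarrow> 'n \<Rightarrow> int \<Rightarrow> 'h falg"
  assumes X: "\<And>a b t. t \<in> {r, s} \<Longrightarrow> X a b t = (\<Sum>p\<le>N. fa_const (A t p) * Z a b (int p))"
    and X_shift: "\<And>a b t. t \<in> {r, s} \<Longrightarrow>
      oy_shift \<beta> X a b t = (\<Sum>p\<le>N. fa_const (A t p) * oy_shift \<gamma> Z a b (int p)) + fa_const (\<kappa> a b t)"
  shows "oy_relator \<beta> X i j k l r s
     = (\<Sum>p\<le>N. \<Sum>q\<le>N. fa_const (A r p * A s q) * oy_relator \<gamma> Z i j k l (int p) (int q))"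
proof -
  have Xr: "X a b r = (\<Sum>p\<le>N. fa_const (A r p) * Z a b (int p))"
    and Xs: "X a b s = (\<Sum>p\<le>N. fa_const (A s p) * Z a b (int p))"
    and Xr': "oy_shift \<beta> X a b r = (\<Sum>p\<le>N. fa_const (A r p) * oy_shift \<gamma> Z a b (int p)) + fa_const (\<kappa> a b r)"
    and Xs': "oy_shift \<beta> X a b s = (\<Sum>p\<le>N. fa_const (A s p) * oy_shift \<gamma> Z a b (int p)) + fa_const (\<kappa> a b s)"
    for a b using X X_shift by simp_all
  show ?thesis
    unfolding oy_relator_def Xr' Xs' Xr Xs fa_comm_add_fa_const fa_comm_sum_fa_const
      sum_fa_const_times_sum_swap[of "A s" _ _ "A r"]
    unfolding sum_fa_const_times_sum
    by (simp add: sum_subtractf right_diff_distrib)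
qed

text \<open>The recursion for the coefficients fails at \<open>p = 0\<close>; the defect is the constant on the
  right.\<close>

lemma oy_shift_expansion:
  fixes X Z :: "int \<Rightarrow> 'h falg" and A :: "int \<Rightarrow> nat \<Rightarrow> complex"
  assumes X: "\<And>t. t \<in> {r - 1, r + 1} \<Longrightarrow> X t = (\<Sum>p\<le>Suc M. fa_const (A t p) * Z (int p))"
    and Z_neg: "Z (-1) = 0" and Z_0: "Z 0 = fa_const z"
    and A_rec: "\<And>p. p \<ge> 1 \<Longrightarrow> A (r + 1) p + \<beta> * A (r - 1) p = A r (p - 1) + \<gamma> * A r (p + 1)"
    and A_top: "A r (Suc M) = 0" "A r (Suc (Suc M)) = 0"
  shows "X (r + 1) + fa_const \<beta> * X (r - 1)
      = (\<Sum>p\<le>Suc M. fa_const (A r p) * (Z (int p + 1) + fa_const \<gamma> * Z (int p - 1)))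
        + fa_const ((A (r + 1) 0 + \<beta> * A (r - 1) 0 - \<gamma> * A r 1) * z)"
proof -
  have up: "(\<Sum>p\<le>Suc M. fa_const (A r p) * Z (int p + 1)) = (\<Sum>p\<le>M. fa_const (A r p) * Z (int (Suc p)))"
    using A_top(1) by (simp add: add.commute)
  have "(\<Sum>p\<le>Suc M. fa_const (A r p) * Z (int p - 1)) = (\<Sum>p\<le>M. fa_const (A r (Suc p)) * Z (int p))"
    by (subst sum.atMost_Suc_shift) (simp add: Z_neg)
  also have "\<dots> = (\<Sum>p\<le>Suc M. fa_const (A r (Suc p)) * Z (int p))"
    using A_top(2) by simp
  also have "\<dots> = fa_const (A r 1) * Z 0 + (\<Sum>p\<le>M. fa_const (A r (Suc (Suc p))) * Z (int (Suc p)))"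
    by (subst sum.atMost_Suc_shift) simp
  finally have down: "(\<Sum>p\<le>Suc M. fa_const (A r p) * Z (int p - 1))
      = fa_const (A r 1) * Z 0 + (\<Sum>p\<le>M. fa_const (A r (Suc (Suc p))) * Z (int (Suc p)))" .
  have "X (r + 1) + fa_const \<beta> * X (r - 1)
      = (\<Sum>p\<le>Suc M. fa_const (A (r + 1) p + \<beta> * A (r - 1) p) * Z (int p))"
    by (simp add: X fa_const_add fa_const_mult distrib_right sum.distrib sum_distrib_left mult.assoc
        del: sum.atMost_Suc)
  also have "\<dots> = fa_const (A (r + 1) 0 + \<beta> * A (r - 1) 0) * Z 0
      + (\<Sum>p\<le>M. fa_const (A r p + \<gamma> * A r (Suc (Suc p))) * Z (int (Suc p)))"
    using A_rec[of "Suc _"] by (simp only: sum.atMost_Suc_shift) simp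
  also have "\<dots> = (\<Sum>p\<le>Suc M. fa_const (A r p) * (Z (int p + 1) + fa_const \<gamma> * Z (int p - 1)))
        + fa_const (A (r + 1) 0 + \<beta> * A (r - 1) 0 - \<gamma> * A r 1) * Z 0"
    unfolding distrib_left sum.distrib up sum_distrib_left[of "fa_const \<gamma>", symmetric] fa_const_left_commute down
    by (simp add: fa_const_add fa_const_diff fa_const_mult distrib_left distrib_right sum.distrib
        sum_distrib_left mult.assoc left_diff_distrib del: sum.atMost_Suc)
  finally show ?thesis
    by (simp add: Z_0 fa_const_mult)
qed

lemma pres_hom_OY_rels_expansion:
  fixes \<phi> :: "('n \<times> 'n \<times> nat) \<Rightarrow> 'h falg" and Z :: "'n \<Rightarrow> 'n \<Rightarrow> int \<Rightarrow> 'h falg"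
    and A :: "int \<Rightarrow> nat \<Rightarrow> complex"
  assumes expansion: "\<And>i j t N. 0 \<le> t \<Longrightarrow> t \<le> int N \<Longrightarrow>
      fa_subst \<phi> (oy_t i j t) = (\<Sum>p\<le>N. fa_const (A t p) * Z i j (int p))"
    and A_neg: "\<And>t p. t < 0 \<Longrightarrow> A t p = 0"
    and A_above: "\<And>t p. t < int p \<Longrightarrow> A t p = 0"
    and A_rec: "\<And>t p. 0 \<le> t \<Longrightarrow> p \<ge> 1 \<Longrightarrow>
      A (t + 1) p + \<beta> * A (t - 1) p = A t (p - 1) + \<gamma> * A t (p + 1)"
    and Z_neg: "\<And>i j. Z i j (-1) = 0"
    and Z_0: "\<And>i j. Z i j 0 = fa_const (kdelta i j)"
    and relators: "\<And>i j k l p q. oy_relator \<gamma> Z i j k l (int p) (int q) \<in> fa_ideal S"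
  shows "pres_hom (OY_rels \<beta>) S \<phi>"
proof (rule pres_homI)
  fix x :: "('n \<times> 'n \<times> nat) falg"
  assume "x \<in> OY_rels \<beta>"
  then obtain i j k l r s where x: "x = oy_relator \<beta> oy_t i j k l (int r) (int s)"
    unfolding OY_rels_eq_oy_relators by blast
  define X where "X i j t = fa_subst \<phi> (oy_t i j t)" for i j t
  \<comment> \<open>Any \<open>M > max r s\<close> works: then degrees up to \<open>M + 1\<close> suffice and \<open>A r\<close>, \<open>A s\<close>
    vanish beyond \<open>M\<close>.\<close>
  define M where "M = r + s + 1"
  have X_expansion: "X a b t = (\<Sum>p\<le>Suc M. fa_const (A t p) * Z a b (int p))"
    if "t \<le> int M + 1" for a b t
  proof (cases "t < 0")
    case True
    then show ?thesis by (simp add: X_def oy_t_def A_neg)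
  next
    case False
    then show ?thesis unfolding X_def using that by (intro expansion) auto
  qed
  have X_shift: "oy_shift \<beta> X a b t = (\<Sum>p\<le>Suc M. fa_const (A t p) * oy_shift \<gamma> Z a b (int p))
      + fa_const ((A (t + 1) 0 + \<beta> * A (t - 1) 0 - \<gamma> * A t 1) * kdelta a b)"
    if "t \<in> {int r, int s}" for a b t
    unfolding oy_shift_def using that
    by (intro oy_shift_expansion X_expansion A_rec A_above Z_neg Z_0) (auto simp: M_def)
  have "fa_subst \<phi> x = oy_relator \<beta> X i j k l (int r) (int s)"
    unfolding x fa_subst_oy_relator X_def ..
  also have "\<dots> = (\<Sum>p\<le>Suc M. \<Sum>q\<le>Suc M.
      fa_const (A (int r) p * A (int s) q) * oy_relator \<gamma> Z i j k l (int p) (int q))"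
    using X_expansion X_shift by (rule oy_relator_expansion) (auto simp: M_def)
  also have "\<dots> \<in> fa_ideal S"
    by (intro fa_ideal_sum fa_ideal_times_left relators)
  finally show "fa_subst \<phi> x \<in> fa_ideal S" .
qed

section \<open>Powers of the series \<open>1/(u + \<beta>/u)\<close>\<close>

definition c_beta_denom :: "complex \<Rightarrow> complex fps" where
  "c_beta_denom \<beta> = 1 + fps_const \<beta> * fps_X ^ 2"

lemma c_beta_eq: "c_beta \<beta> = fps_X * inverse (c_beta_denom \<beta>)"
  unfolding c_beta_def c_beta_denom_def[symmetric]
  by (rule fps_divide_unit) (simp add: c_beta_denom_def)

lemma c_beta_times_denom: "c_beta \<beta> * c_beta_denom \<beta> = fps_X"
  by (simp add: c_beta_eq mult.assoc inverse_mult_eq_1 c_beta_denom_def)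

lemma fps_nth_c_beta_power_below: "n < p \<Longrightarrow> fps_nth (c_beta \<beta> ^ p) n = 0"
  by (simp add: c_beta_eq power_mult_distrib fps_X_power_mult_nth)

lemma fps_nth_c_beta_power_self: "fps_nth (c_beta \<beta> ^ p) p = 1"
proof -
  have "fps_nth (inverse (c_beta_denom \<beta>) ^ q) 0 = 1" for q
    by (induction q) (simp_all add: c_beta_denom_def)
  then show ?thesis
    by (simp add: c_beta_eq power_mult_distrib fps_X_power_mult_nth)
qed

lemma fps_nth_times_c_beta_denom:
  "fps_nth (g * c_beta_denom \<beta>) n = fps_nth g n + (if n \<ge> 2 then \<beta> * fps_nth g (n - 2) else 0)"
proof -
  have "g * c_beta_denom \<beta> = g + fps_const \<beta> * (g * fps_X ^ 2)"
    by (simp add: c_beta_denom_def algebra_simps)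
  then show ?thesis
    by (simp add: fps_X_power_mult_right_nth)
qed

lemma fps_nth_c_beta_power_rec:
  assumes "p \<ge> 1"
  shows "fps_nth (c_beta \<beta> ^ p) (Suc n) + (if n \<ge> 1 then \<beta> * fps_nth (c_beta \<beta> ^ p) (n - 1) else 0)
    = fps_nth (c_beta \<beta> ^ (p - 1)) n"
proof -
  obtain q where q: "p = Suc q" using assms by (cases p) auto
  have "c_beta \<beta> ^ p * c_beta_denom \<beta> = fps_X * c_beta \<beta> ^ (p - 1)"
    by (simp add: q mult.assoc c_beta_times_denom mult.commute)
  then have "fps_nth (c_beta \<beta> ^ p * c_beta_denom \<beta>) (Suc n) = fps_nth (c_beta \<beta> ^ (p - 1)) n"
    by simp
  then show ?thesis
    unfolding fps_nth_times_c_beta_denom by (cases n) auto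
qed

definition c_beta_power_coeff :: "complex \<Rightarrow> int \<Rightarrow> nat \<Rightarrow> complex" where
  "c_beta_power_coeff \<beta> t p = (if t < 0 then 0 else fps_nth (c_beta \<beta> ^ p) (nat t))"

lemma c_beta_power_coeff_neg: "t < 0 \<Longrightarrow> c_beta_power_coeff \<beta> t p = 0"
  by (simp add: c_beta_power_coeff_def)

lemma c_beta_power_coeff_above: "t < int p \<Longrightarrow> c_beta_power_coeff \<beta> t p = 0"
  by (simp add: c_beta_power_coeff_def fps_nth_c_beta_power_below)

lemma c_beta_power_coeff_rec:
  assumes "0 \<le> t" "p \<ge> 1"
  shows "c_beta_power_coeff \<beta> (t + 1) p + \<beta> * c_beta_power_coeff \<beta> (t - 1) p
    = c_beta_power_coeff \<beta> t (p - 1)"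
proof -
  obtain n where n: "t = int n" using assms(1) by (metis nonneg_eq_int)
  show ?thesis
    using fps_nth_c_beta_power_rec[OF assms(2), of \<beta> n]
    by (cases n) (auto simp: c_beta_power_coeff_def n nat_add_distrib)
qed

section \<open>The Yangian and the evaluation homomorphism\<close>

definition y_family :: "'n \<Rightarrow> 'n \<Rightarrow> int \<Rightarrow> ('n \<times> 'n \<times> nat) falg" where
  "y_family i j t = (if t < 0 then 0 else y_t i j (nat t))"

lemma fa_subst_yan_map_oy_t:
  assumes "0 \<le> t" "t \<le> int N"
  shows "fa_subst (yan_map \<beta>) (oy_t i j t)
    = (\<Sum>p\<le>N. fa_const (c_beta_power_coeff \<beta> t p) * y_family i j (int p))"
proof -
  have "fa_subst (yan_map \<beta>) (oy_t i j t)
      = (\<Sum>p\<in>{0..nat t}. fa_const (c_beta_power_coeff \<beta> t p) * y_family i j (int p))"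
  proof (cases "t = 0")
    case True
    then show ?thesis
      by (simp add: oy_t_def y_family_def y_t_def c_beta_power_coeff_def)
  next
    case False
    with assms(1) have "nat t = Suc (nat (t - 1))" by simp
    with False assms(1) show ?thesis
      by (simp add: oy_t_pos yan_map_def fa_smult_eq_times c_beta_power_coeff_def y_family_def)
  qed
  also have "\<dots> = (\<Sum>p\<le>N. fa_const (c_beta_power_coeff \<beta> t p) * y_family i j (int p))"
    by (rule sum.mono_neutral_left) (use assms in \<open>auto simp: c_beta_power_coeff_above\<close>)
  finally show ?thesis .
qed

lemma Y_rels_eq_oy_relators:
  "Y_rels = {oy_relator 0 y_family i j k l (int r) (int s) | i j k l r s. True}"
  by (simp add: Y_rels_def oy_relator_def oy_shift_def y_family_def fa_comm_eq fa_mult_eq_times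
      nat_add_distrib)

lemma y_family_relator_in_Y_ideal: "oy_relator 0 y_family i j k l (int p) (int q) \<in> fa_ideal Y_rels"
  unfolding Y_rels_eq_oy_relators by (rule fa_ideal.gen) blast

lemma yan_map_pres_hom: "pres_hom (OY_rels \<beta>) Y_rels (yan_map \<beta>)"
  by (rule pres_hom_OY_rels_expansion[where A = "c_beta_power_coeff \<beta>" and Z = y_family and \<gamma> = 0])
    (auto simp: fa_subst_yan_map_oy_t c_beta_power_coeff_above c_beta_power_coeff_rec
      c_beta_power_coeff_neg y_family_relator_in_Y_ideal y_family_def y_t_def)

text \<open>The generating matrix \<open>1 + E u^-1\<close> of \<open>U(gl_n)\<close>, which satisfies the Yangian relations.\<close>

definition ev_family :: "'n \<Rightarrow> 'n \<Rightarrow> int \<Rightarrow> ('n \<times> 'n) falg" where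
  "ev_family i j t = (if t = 0 then fa_const (kdelta i j) else if t = 1 then fa_var (i, j) else 0)"

lemma fps_nth_c_beta_1 [simp]: "fps_nth (c_beta \<beta>) (Suc 0) = 1"
  using fps_nth_c_beta_power_self[of \<beta> 1] by simp

lemma fa_subst_ev_map_oy_t:
  assumes "0 \<le> t" "t \<le> int N"
  shows "fa_subst (ev_map \<beta>) (oy_t i j t)
    = (\<Sum>p\<le>N. fa_const (c_beta_power_coeff \<beta> t p) * ev_family i j (int p))"
proof (cases "t = 0")
  case True
  have "(\<Sum>p\<le>N. fa_const (c_beta_power_coeff \<beta> t p) * ev_family i j (int p))
      = (\<Sum>p\<in>{0}. fa_const (c_beta_power_coeff \<beta> t p) * ev_family i j (int p))"
    by (rule sum.mono_neutral_right) (auto simp: True c_beta_power_coeff_above)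
  then show ?thesis
    by (simp add: True oy_t_def c_beta_power_coeff_def ev_family_def)
next
  case False
  with assms have "t \<ge> 1" "N \<ge> 1" by auto
  have "(\<Sum>p\<le>N. fa_const (c_beta_power_coeff \<beta> t p) * ev_family i j (int p))
      = (\<Sum>p\<in>{0, 1}. fa_const (c_beta_power_coeff \<beta> t p) * ev_family i j (int p))"
    by (rule sum.mono_neutral_right) (use \<open>N \<ge> 1\<close> in \<open>auto simp: ev_family_def\<close>)
  also have "\<dots> = fa_const (fps_nth (c_beta \<beta>) (nat t)) * fa_var (i, j)"
    using \<open>t \<ge> 1\<close> by (simp add: c_beta_power_coeff_def ev_family_def)
  also have "\<dots> = fa_subst (ev_map \<beta>) (oy_t i j t)"
    using \<open>t \<ge> 1\<close> by (simp add: oy_t_pos ev_map_def fa_smult_eq_times Suc_nat_eq_nat_zadd1)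
  finally show ?thesis ..
qed

definition U_relator :: "'n \<Rightarrow> 'n \<Rightarrow> 'n \<Rightarrow> 'n \<Rightarrow> ('n \<times> 'n) falg" where
  "U_relator i j k l = fa_comm (fa_var (i, j)) (fa_var (k, l))
     - (fa_const (kdelta k j) * fa_var (i, l) - fa_const (kdelta i l) * fa_var (k, j))"

lemma U_rels_eq_U_relators: "U_rels = {U_relator i j k l | i j k l. True}"
  by (simp add: U_rels_def U_relator_def fa_smult_eq_times)

lemma U_relator_in_U_ideal: "U_relator i j k l \<in> fa_ideal U_rels"
  unfolding U_rels_eq_U_relators by (rule fa_ideal.gen) blast

lemma ev_family_relator_in_U_ideal: "oy_relator 0 ev_family i j k l (int p) (int q) \<in> fa_ideal U_rels"
proof -
  consider "p = 0 \<or> q = 0" "p \<le> 1" "q \<le> 1" | "p = 1" "q = 1" | "p \<ge> 2 \<or> q \<ge> 2"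
    by linarith
  then show ?thesis
  proof cases
    case 1
    then consider "p = 0" "q = 0" | "p = 0" "q = 1" | "p = 1" "q = 0" by linarith
    then show ?thesis
    proof cases
      case 1
      then show ?thesis by (simp add: oy_relator_def oy_shift_def ev_family_def fa_ideal.zero)
    next
      case 2
      then have "oy_relator 0 ev_family i j k l (int p) (int q) = U_relator i j k l"
        by (simp add: oy_relator_def oy_shift_def ev_family_def U_relator_def fa_const_commute)
      then show ?thesis using U_relator_in_U_ideal by simp
    next
      case 3
      then have "oy_relator 0 ev_family i j k l (int p) (int q) = - U_relator i j k l"
        by (simp add: oy_relator_def oy_shift_def ev_family_def U_relator_def fa_const_commute)
      then show ?thesis using U_relator_in_U_ideal fa_ideal_uminus by metis
    qed
  next
    case 2
    then show ?thesis by (simp add: oy_relator_def oy_shift_def ev_family_def fa_ideal.zero)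
  next
    case 3
    then show ?thesis by (auto simp: oy_relator_def oy_shift_def ev_family_def fa_ideal.zero)
  qed
qed

lemma ev_map_pres_hom: "pres_hom (OY_rels \<beta>) U_rels (ev_map \<beta>)"
  by (rule pres_hom_OY_rels_expansion[where A = "c_beta_power_coeff \<beta>" and Z = ev_family and \<gamma> = 0])
    (auto simp: fa_subst_ev_map_oy_t c_beta_power_coeff_above c_beta_power_coeff_rec
      c_beta_power_coeff_neg ev_family_relator_in_U_ideal ev_family_def)

lemma fa_subst_ev_map_oy_emb: "fa_subst (ev_map \<beta>) (oy_emb g) = fa_var g"
  by (cases g) (simp add: oy_emb_def oy_t_def ev_map_def fa_smult_eq_times)

lemma oy_emb_pres_hom: "pres_hom U_rels (OY_rels \<beta>) oy_emb"
proof (rule pres_homI)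
  fix x :: "('n \<times> 'n) falg"
  assume "x \<in> U_rels"
  then obtain i j k l where x: "x = U_relator i j k l"
    unfolding U_rels_eq_U_relators by blast
  have "fa_subst oy_emb x = - oy_relator \<beta> oy_t i j k l (int 1) (int 0)"
    by (simp add: x U_relator_def oy_relator_def oy_shift_def oy_emb_def fa_subst_fa_comm
        fa_subst_diff fa_subst_mult oy_t_def fa_const_commute[of _ "fa_var _", symmetric])
  then show "fa_subst oy_emb x \<in> fa_ideal (OY_rels \<beta>)"
    using oy_relator_in_OY_ideal fa_ideal_uminus by metis
qed

section \<open>Multiplication by a scalar series\<close>

text \<open>The coefficient of \<open>u^-t\<close> in \<open>f(u) u^-p\<close>.\<close>

definition shifted_coeff :: "complex fps \<Rightarrow> int \<Rightarrow> nat \<Rightarrow> complex" where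
  "shifted_coeff f t p = (if t < 0 \<or> t < int p then 0 else fps_nth f (nat t - p))"

lemma shifted_coeff_neg: "t < 0 \<Longrightarrow> shifted_coeff f t p = 0"
  and shifted_coeff_above: "t < int p \<Longrightarrow> shifted_coeff f t p = 0"
  by (simp_all add: shifted_coeff_def)

lemma shifted_coeff_rec:
  assumes "0 \<le> t" "p \<ge> 1"
  shows "shifted_coeff f (t + 1) p + \<beta> * shifted_coeff f (t - 1) p
    = shifted_coeff f t (p - 1) + \<beta> * shifted_coeff f t (p + 1)"
proof -
  obtain n where n: "t = int n" using assms(1) by (metis nonneg_eq_int)
  have "shifted_coeff f (t + 1) p = shifted_coeff f t (p - 1)"
    using assms(2) by (auto simp: shifted_coeff_def n nat_add_distrib Suc_diff_le)
  moreover have "shifted_coeff f (t - 1) p = shifted_coeff f t (p + 1)"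
    using assms(2) by (auto simp: shifted_coeff_def n nat_diff_distrib)
  ultimately show ?thesis by simp
qed

lemma fa_subst_mult_map_oy_t:
  assumes "fps_nth f 0 = 1" "0 \<le> t" "t \<le> int N"
  shows "fa_subst (mult_map f) (oy_t i j t) = (\<Sum>p\<le>N. fa_const (shifted_coeff f t p) * oy_t i j (int p))"
proof -
  have "fa_subst (mult_map f) (oy_t i j t) = (\<Sum>p\<in>{0..nat t}. fa_const (shifted_coeff f t p) * oy_t i j (int p))"
  proof (cases "t = 0")
    case True
    then show ?thesis by (simp add: oy_t_def shifted_coeff_def assms(1))
  next
    case False
    with assms(2) have t: "t > 0" "Suc (nat (t - 1)) = nat t" by simp_all
    then have "fa_subst (mult_map f) (oy_t i j t)
        = (\<Sum>s\<in>{0..nat t}. fa_const (fps_nth f (nat t - s)) * oy_t i j (int s))"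
      by (simp only: oy_t_pos fa_subst_var mult_map_def prod.case fa_smult_eq_times)
    also have "\<dots> = (\<Sum>p\<in>{0..nat t}. fa_const (shifted_coeff f t p) * oy_t i j (int p))"
      using t by (intro sum.cong refl) (auto simp: shifted_coeff_def)
    finally show ?thesis .
  qed
  also have "\<dots> = (\<Sum>p\<le>N. fa_const (shifted_coeff f t p) * oy_t i j (int p))"
    by (rule sum.mono_neutral_left) (use assms in \<open>auto simp: shifted_coeff_def\<close>)
  finally show ?thesis .
qed

lemma mult_map_pres_hom:
  assumes "fps_nth f 0 = 1"
  shows "pres_hom (OY_rels \<beta>) (OY_rels \<beta>) (mult_map f)"
  by (rule pres_hom_OY_rels_expansion[where A = "shifted_coeff f" and Z = oy_t and \<gamma> = \<beta>])
    (auto simp: fa_subst_mult_map_oy_t[OF assms] shifted_coeff_rec shifted_coeff_neg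
      shifted_coeff_above oy_t_neg_1 oy_t_0 oy_relator_in_OY_ideal)

lemma sum_fps_nth_times_shifted_coeff:
  assumes "q \<le> n"
  shows "(\<Sum>s\<in>{0..n}. fps_nth f (n - s) * shifted_coeff g (int s) q) = fps_nth (g * f) (n - q)"
proof -
  have "(\<Sum>s\<in>{0..n}. fps_nth f (n - s) * shifted_coeff g (int s) q)
      = (\<Sum>s\<in>{q..n}. fps_nth f (n - s) * fps_nth g (s - q))"
    by (rule sum.mono_neutral_cong_right) (auto simp: shifted_coeff_def)
  also have "\<dots> = (\<Sum>s\<in>{0 + q..(n - q) + q}. fps_nth f (n - s) * fps_nth g (s - q))"
    using assms by simp
  also have "\<dots> = (\<Sum>i\<in>{0..n - q}. fps_nth f (n - q - i) * fps_nth g i)"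
    by (subst sum.shift_bounds_cl_nat_ivl) (simp add: algebra_simps)
  also have "\<dots> = fps_nth (g * f) (n - q)"
    unfolding fps_mult_nth by (intro sum.cong refl) (simp add: mult.commute)
  finally show ?thesis .
qed

lemma fa_subst_mult_map_mult_map:
  assumes "fps_nth g 0 = 1" "g * f = 1"
  shows "fa_subst (mult_map g) (mult_map f x) = fa_var x"
proof -
  obtain i j m where x: "x = (i, j, m)" by (cases x) auto
  define n where "n = Suc m"
  have "fa_subst (mult_map g) (mult_map f x)
      = (\<Sum>s\<in>{0..n}. fa_const (fps_nth f (n - s)) * fa_subst (mult_map g) (oy_t i j (int s)))"
    by (simp only: x mult_map_def prod.case n_def fa_smult_eq_times fa_subst_sum fa_subst_mult
        fa_subst_const)
  also have "\<dots> = (\<Sum>s\<in>{0..n}. fa_const (fps_nth f (n - s))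
      * (\<Sum>q\<le>n. fa_const (shifted_coeff g (int s) q) * oy_t i j (int q)))"
    by (intro sum.cong refl arg_cong2[where f = "(*)"] fa_subst_mult_map_oy_t assms(1)) auto
  also have "\<dots> = (\<Sum>q\<le>n. fa_const (\<Sum>s\<in>{0..n}. fps_nth f (n - s) * shifted_coeff g (int s) q)
      * oy_t i j (int q))"
    by (simp add: sum_distrib_left sum_distrib_right fa_const_sum fa_const_mult mult.assoc)
      (rule sum.swap)
  also have "\<dots> = (\<Sum>q\<le>n. if q = n then oy_t i j (int q) else 0)"
    by (intro sum.cong refl) (auto simp: sum_fps_nth_times_shifted_coeff assms(2))
  also have "\<dots> = fa_var x"
    by (simp add: oy_t_def x n_def)
  finally show ?thesis .
qed

lemma mult_map_pres_aut:
  assumes "fps_nth f 0 = 1"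
  shows "pres_aut (OY_rels \<beta>) (mult_map f)"
proof -
  have "fps_nth (inverse f) 0 = 1"
    by (simp add: assms)
  then show ?thesis
    by (intro pres_autI[where \<psi> = "mult_map (inverse f)"] mult_map_pres_hom fa_subst_mult_map_mult_map)
      (simp_all add: assms inverse_mult_eq_1 inverse_mult_eq_1')
qed

section \<open>Conjugation by an invertible matrix\<close>

definition conj_weight :: "complex^'n^'n \<Rightarrow> complex^'n^'n \<Rightarrow> 'n \<Rightarrow> 'n \<Rightarrow> 'n \<times> 'n \<Rightarrow> complex" where
  "conj_weight P Q i j ab = P $ i $ fst ab * Q $ snd ab $ j"

lemma sum_pairs_swap_fst:
  fixes G :: "('n::finite \<times> 'n) \<Rightarrow> ('n \<times> 'n) \<Rightarrow> 'h::comm_monoid_add"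
  shows "(\<Sum>x\<in>UNIV. \<Sum>y\<in>UNIV. G x y) = (\<Sum>x\<in>UNIV. \<Sum>y\<in>UNIV. G (fst y, snd x) (fst x, snd y))"
proof -
  let ?swap = "\<lambda>z. ((fst (snd z), snd (fst z)), (fst (fst z), snd (snd z)))"
  have "(\<Sum>x\<in>UNIV. \<Sum>y\<in>UNIV. G x y) = (\<Sum>z\<in>UNIV \<times> UNIV. G (fst z) (snd z))"
    by (simp add: sum.cartesian_product split_def)
  also have "\<dots> = (\<Sum>z\<in>UNIV \<times> UNIV. G (fst (?swap z)) (snd (?swap z)))"
    by (rule sum.reindex_bij_witness[where i = ?swap and j = ?swap]) auto
  also have "\<dots> = (\<Sum>x\<in>UNIV. \<Sum>y\<in>UNIV. G (fst y, snd x) (fst x, snd y))"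
    by (simp add: sum.cartesian_product split_def)
  finally show ?thesis .
qed

lemma oy_relator_conj_expansion:
  fixes X Z :: "'n::finite \<Rightarrow> 'n \<Rightarrow> int \<Rightarrow> 'h falg"
  assumes X: "\<And>i j t. X i j t = (\<Sum>ab\<in>UNIV. fa_const (conj_weight P Q i j ab) * Z (fst ab) (snd ab) t)"
  shows "oy_relator \<beta> X i j k l r s = (\<Sum>ab\<in>UNIV. \<Sum>cd\<in>UNIV.
      fa_const (conj_weight P Q i j ab * conj_weight P Q k l cd)
      * oy_relator \<beta> Z (fst ab) (snd ab) (fst cd) (snd cd) r s)"
proof -
  let ?w = "conj_weight P Q"
  have X_shift: "oy_shift \<beta> X a b t = (\<Sum>ab\<in>UNIV. fa_const (?w a b ab) * oy_shift \<beta> Z (fst ab) (snd ab) t)"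
    for a b t
    unfolding oy_shift_def X by (simp add: sum_distrib_left distrib_left sum.distrib fa_const_left_commute)
  have "X k j r * X i l s - X k j s * X i l r = (\<Sum>ab\<in>UNIV. \<Sum>cd\<in>UNIV. fa_const (?w k j ab * ?w i l cd)
      * (Z (fst ab) (snd ab) r * Z (fst cd) (snd cd) s - Z (fst ab) (snd ab) s * Z (fst cd) (snd cd) r))"
    unfolding X sum_fa_const_times_sum by (simp add: sum_subtractf right_diff_distrib)
  also have "\<dots> = (\<Sum>ab\<in>UNIV. \<Sum>cd\<in>UNIV. fa_const (?w k j (fst cd, snd ab) * ?w i l (fst ab, snd cd))
      * (Z (fst cd) (snd ab) r * Z (fst ab) (snd cd) s - Z (fst cd) (snd ab) s * Z (fst ab) (snd cd) r))"
    \<comment> \<open>exchange the first indices of the two pairs, matching the weights of \<open>X i j\<close>, \<open>X k l\<close>\<close>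
    using sum_pairs_swap_fst[where G = "\<lambda>x y. fa_const (?w k j x * ?w i l y)
      * (Z (fst x) (snd x) r * Z (fst y) (snd y) s - Z (fst x) (snd x) s * Z (fst y) (snd y) r)"]
    by simp
  also have "\<dots> = (\<Sum>ab\<in>UNIV. \<Sum>cd\<in>UNIV. fa_const (?w i j ab * ?w k l cd)
      * (Z (fst cd) (snd ab) r * Z (fst ab) (snd cd) s - Z (fst cd) (snd ab) s * Z (fst ab) (snd cd) r))"
    by (intro sum.cong refl) (simp add: conj_weight_def mult_ac)
  finally have products: "X k j r * X i l s - X k j s * X i l r = \<dots>" .
  show ?thesis
    unfolding oy_relator_def X_shift X[of i j] X[of k l] fa_comm_sum_fa_const products
    by (simp add: sum_subtractf right_diff_distrib)
qed

text \<open>With the two factors separated, the inverse of \<open>conj_map B\<close> is \<open>conj_subst (matrix_inv B) B\<close>,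
  which avoids \<open>matrix_inv (matrix_inv B)\<close>.\<close>

definition conj_subst ::
    "complex^'n^'n \<Rightarrow> complex^'n^'n \<Rightarrow> ('n::finite \<times> 'n \<times> nat) \<Rightarrow> ('n \<times> 'n \<times> nat) falg" where
  "conj_subst P Q = (\<lambda>(i, j, m).
     \<Sum>ab\<in>UNIV. fa_const (conj_weight P Q i j ab) * oy_t (fst ab) (snd ab) (int (Suc m)))"

lemma conj_map_eq_conj_subst: "conj_map B = conj_subst B (matrix_inv B)"
  by (simp add: fun_eq_iff conj_map_def conj_subst_def conj_weight_def fa_smult_eq_times
      sum.cartesian_product split_def)

lemma matrix_mult_eq_mat_1_nth:
  assumes "(A :: complex^'n::finite^'n) ** B = mat 1"
  shows "(\<Sum>a\<in>UNIV. A $ i $ a * B $ a $ c) = kdelta i c"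
proof -
  have "(A ** B) $ i $ c = (mat 1 :: complex^'n^'n) $ i $ c"
    by (simp add: assms)
  then show ?thesis
    by (simp add: matrix_matrix_mult_def mat_def kdelta_def)
qed

lemma fa_subst_conj_subst_oy_t:
  assumes "P ** Q = mat 1"
  shows "fa_subst (conj_subst P Q) (oy_t i j t)
    = (\<Sum>ab\<in>UNIV. fa_const (conj_weight P Q i j ab) * oy_t (fst ab) (snd ab) t)"
proof -
  consider "t < 0" | "t = 0" | "t > 0" by linarith
  then show ?thesis
  proof cases
    case 1
    then show ?thesis by (simp add: oy_t_def)
  next
    case 2
    have "(\<Sum>ab\<in>UNIV. conj_weight P Q i j ab * kdelta (fst ab) (snd ab))
        = (\<Sum>a\<in>UNIV. \<Sum>b\<in>UNIV. P $ i $ a * Q $ b $ j * kdelta a b)"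
      by (simp add: conj_weight_def sum.cartesian_product split_def)
    also have "\<dots> = (\<Sum>a\<in>UNIV. P $ i $ a * Q $ a $ j)"
      by (intro sum.cong refl) (simp add: kdelta_def if_distrib cong: if_cong)
    also have "\<dots> = kdelta i j"
      by (rule matrix_mult_eq_mat_1_nth[OF assms])
    finally have "fa_const (kdelta i j)
        = (\<Sum>ab\<in>UNIV. fa_const (conj_weight P Q i j ab) * fa_const (kdelta (fst ab) (snd ab)))"
      by (simp flip: fa_const_sum fa_const_mult)
    then show ?thesis
      by (simp add: 2 oy_t_def)
  next
    case 3
    then have "fa_subst (conj_subst P Q) (oy_t i j t) = conj_subst P Q (i, j, nat (t - 1))"
      by (simp add: oy_t_pos)
    with 3 show ?thesis
      by (simp add: conj_subst_def)
  qed
qed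

lemma conj_subst_pres_hom:
  fixes P Q :: "complex^'n::finite^'n"
  assumes "P ** Q = mat 1"
  shows "pres_hom (OY_rels \<beta>) (OY_rels \<beta>) (conj_subst P Q)"
proof (rule pres_homI)
  fix x :: "('n \<times> 'n \<times> nat) falg"
  assume "x \<in> OY_rels \<beta>"
  then obtain i j k l r s where x: "x = oy_relator \<beta> oy_t i j k l (int r) (int s)"
    unfolding OY_rels_eq_oy_relators by blast
  have "fa_subst (conj_subst P Q) x = (\<Sum>ab\<in>UNIV. \<Sum>cd\<in>UNIV.
      fa_const (conj_weight P Q i j ab * conj_weight P Q k l cd)
      * oy_relator \<beta> oy_t (fst ab) (snd ab) (fst cd) (snd cd) (int r) (int s))"
    unfolding x fa_subst_oy_relator
    by (rule oy_relator_conj_expansion) (rule fa_subst_conj_subst_oy_t[OF assms])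
  also have "\<dots> \<in> fa_ideal (OY_rels \<beta>)"
    by (intro fa_ideal_sum fa_ideal_times_left oy_relator_in_OY_ideal)
  finally show "fa_subst (conj_subst P Q) x \<in> fa_ideal (OY_rels \<beta>)" .
qed

lemma sum_conj_weight_conj_weight:
  fixes P Q P' Q' :: "complex^'n::finite^'n"
  assumes "P ** P' = mat 1" "Q' ** Q = mat 1"
  shows "(\<Sum>ab\<in>UNIV. conj_weight P Q i j ab * conj_weight P' Q' (fst ab) (snd ab) cd)
    = kdelta i (fst cd) * kdelta (snd cd) j"
proof -
  have "(\<Sum>ab\<in>UNIV. conj_weight P Q i j ab * conj_weight P' Q' (fst ab) (snd ab) cd)
      = (\<Sum>a\<in>UNIV. P $ i $ a * P' $ a $ fst cd) * (\<Sum>b\<in>UNIV. Q' $ snd cd $ b * Q $ b $ j)"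
    unfolding sum_product UNIV_Times_UNIV[symmetric] sum.cartesian_product
    by (intro sum.cong refl) (auto simp: conj_weight_def ac_simps)
  then show ?thesis
    by (simp add: matrix_mult_eq_mat_1_nth[OF assms(1)] matrix_mult_eq_mat_1_nth[OF assms(2)])
qed

lemma fa_subst_conj_subst_conj_subst:
  fixes P Q P' Q' :: "complex^'n::finite^'n"
  assumes "P ** P' = mat 1" "Q' ** Q = mat 1"
  shows "fa_subst (conj_subst P' Q') (conj_subst P Q x) = fa_var x"
proof -
  obtain i j m where x: "x = (i, j, m)" by (cases x) auto
  define Y where "Y cd = oy_t (fst cd) (snd cd) (int (Suc m))" for cd :: "'n \<times> 'n"
  have Y_image: "fa_subst (conj_subst P' Q') (oy_t a b (int (Suc m)))
      = (\<Sum>cd\<in>UNIV. fa_const (conj_weight P' Q' a b cd) * Y cd)" for a b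
    by (simp add: oy_t_def conj_subst_def Y_def)
  have "fa_subst (conj_subst P' Q') (conj_subst P Q x)
      = (\<Sum>ab\<in>UNIV. fa_const (conj_weight P Q i j ab)
          * fa_subst (conj_subst P' Q') (oy_t (fst ab) (snd ab) (int (Suc m))))"
    by (simp only: x conj_subst_def prod.case fa_subst_sum fa_subst_mult fa_subst_const)
  also have "\<dots> = (\<Sum>ab\<in>UNIV. \<Sum>cd\<in>UNIV.
      fa_const (conj_weight P Q i j ab * conj_weight P' Q' (fst ab) (snd ab) cd) * Y cd)"
    by (simp only: Y_image sum_distrib_left mult.assoc[symmetric] fa_const_mult)
  also have "\<dots> = (\<Sum>cd\<in>UNIV. \<Sum>ab\<in>UNIV.
      fa_const (conj_weight P Q i j ab * conj_weight P' Q' (fst ab) (snd ab) cd) * Y cd)"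
    by (rule sum.swap)
  also have "\<dots> = (\<Sum>cd\<in>UNIV. fa_const (\<Sum>ab\<in>UNIV.
      conj_weight P Q i j ab * conj_weight P' Q' (fst ab) (snd ab) cd) * Y cd)"
    by (simp only: sum_distrib_right fa_const_sum)
  also have "\<dots> = (\<Sum>cd\<in>UNIV. if cd = (i, j) then Y cd else 0)"
    unfolding sum_conj_weight_conj_weight[OF assms] by (intro sum.cong refl) (auto simp: kdelta_def)
  also have "\<dots> = Y (i, j)"
    by simp
  also have "\<dots> = fa_var x"
    by (simp add: Y_def x oy_t_def)
  finally show ?thesis .
qed

lemma invertible_matrix_inv:
  assumes "invertible (B :: complex^'n::finite^'n)"
  shows "B ** matrix_inv B = mat 1" "matrix_inv B ** B = mat 1"
  using someI_ex[OF assms[unfolded invertible_def]] by (simp_all add: matrix_inv_def)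

lemma conj_map_pres_aut:
  assumes "invertible (B :: complex^'n::finite^'n)"
  shows "pres_aut (OY_rels \<beta>) (conj_map B)"
  unfolding conj_map_eq_conj_subst
proof (rule pres_autI[where \<psi> = "conj_subst (matrix_inv B) B"])
  note inv = invertible_matrix_inv[OF assms]
  show "pres_hom (OY_rels \<beta>) (OY_rels \<beta>) (conj_subst B (matrix_inv B))"
    "pres_hom (OY_rels \<beta>) (OY_rels \<beta>) (conj_subst (matrix_inv B) B)"
    using inv by (simp_all add: conj_subst_pres_hom)
  show "fa_subst (conj_subst (matrix_inv B) B) (conj_subst B (matrix_inv B) g) = fa_var g"
    "fa_subst (conj_subst B (matrix_inv B)) (conj_subst (matrix_inv B) B g) = fa_var g" for g
    using inv by (simp_all add: fa_subst_conj_subst_conj_subst)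
qed

theorem mainTheorem7:
  fixes \<beta> :: complex
  assumes "\<beta> \<noteq> 0"
  shows "pres_hom (OY_rels \<beta>) (U_rels :: ('n::finite \<times> 'n) falg set) (ev_map \<beta>)
       \<and> pres_surj (OY_rels \<beta>) (U_rels :: ('n \<times> 'n) falg set) (ev_map \<beta>)
       \<and> pres_hom (U_rels :: ('n \<times> 'n) falg set) (OY_rels \<beta>) oy_emb
       \<and> pres_inj (U_rels :: ('n \<times> 'n) falg set) (OY_rels \<beta>) oy_emb
       \<and> pres_hom (OY_rels \<beta> :: ('n \<times> 'n \<times> nat) falg set) Y_rels (yan_map \<beta>)
       \<and> (\<forall>f. fps_nth f 0 = 1 \<longrightarrow> pres_aut (OY_rels \<beta> :: ('n \<times> 'n \<times> nat) falg set) (mult_map f))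
       \<and> (\<forall>B :: complex^'n^'n. invertible B \<longrightarrow> pres_aut (OY_rels \<beta>) (conj_map B))"
  using ev_map_pres_hom[of \<beta>] pres_surjI[OF fa_subst_ev_map_oy_emb]
    oy_emb_pres_hom[of \<beta>] pres_injI[OF ev_map_pres_hom fa_subst_ev_map_oy_emb]
    yan_map_pres_hom[of \<beta>] mult_map_pres_aut conj_map_pres_aut
  by blast

end
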